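(* Let $\Phi:(X,d^X,\mu,T)\to(Y,d^Y,\nu,S)$ be a Borel factor map of compact model p.-p. systems, and let $\varepsilon>0$. Then there is $L<\infty$ such that for all sufficiently large $N\in\mathbb{N}$ there is a compact subset $X_0\subseteq X$ with $\mu(X_0)>1-\varepsilon$ such that $\Phi|_{X_0}$ is continuous and is $(\varepsilon N)$-almost $L$-Lipschitz both as a map $(X_0,d^{\mathbf{X}}_{[-N;0)})\to(Y,d^{\mathbf{Y}}_{[-N;0)})$ and as a map $(X_0,d^{\mathbf{X}}_{[0;N)})\to(Y,d^{\mathbf{Y}}_{[0;N)})$.
   Context: Compact model p.-p. system $(X,d^X,\mu,T)$: compact metric space, homeomorphism $T$, $T$-invariant Borel probability $\mu$. $d^{\mathbf{X}}_F(x,x')=\sum_{n\in F}d^X(T^nx,T^nx')$ for finite $F\subseteq\mathbb{Z}$. A Borel factor map is a Borel $\Phi$ with $\Phi\circ T=S\circ\Phi$ $\mu$-a.e. and $\Phi_*\mu=\nu$. A map $f$ between (pseudo)metric spaces is $c$-almost $L$-Lipschitz if $d(f(x),f(x'))\le Ld(x,x')+c$ for all $x,x'$. *)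

theory Defs
  imports "HOL-Analysis.Analysis" "HOL-Probability.Probability"
begin

definition zpow :: "('a \<Rightarrow> 'a) \<Rightarrow> int \<Rightarrow> 'a \<Rightarrow> 'a" where
  "zpow T n = (if 0 \<le> n then T ^^ nat n else (inv T) ^^ nat (- n))"

definition dyn_dist :: "('a::metric_space \<Rightarrow> 'a) \<Rightarrow> int set \<Rightarrow> 'a \<Rightarrow> 'a \<Rightarrow> real" where
  "dyn_dist T F x x' = (\<Sum>n\<in>F. dist (zpow T n x) (zpow T n x'))"

definition compact_model_pps :: "'a::metric_space measure \<Rightarrow> ('a \<Rightarrow> 'a) \<Rightarrow> bool" where
  "compact_model_pps M T \<longleftrightarrow> compact (UNIV :: 'a set) \<and>
     (\<exists>T'. homeomorphism UNIV UNIV T T') \<and>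
     prob_space M \<and> sets M = sets borel \<and> T \<in> M \<rightarrow>\<^sub>M M \<and> distr M M T = M"

definition borel_factor_map ::
  "'a::metric_space measure \<Rightarrow> ('a \<Rightarrow> 'a) \<Rightarrow> 'b::metric_space measure \<Rightarrow> ('b \<Rightarrow> 'b) \<Rightarrow> ('a \<Rightarrow> 'b) \<Rightarrow> bool" where
  "borel_factor_map M T N S \<Phi> \<longleftrightarrow> \<Phi> \<in> borel_measurable borel \<and>
     (AE x in M. \<Phi> (T x) = S (\<Phi> x)) \<and> distr M N \<Phi> = N"

definition almost_lipschitz_on ::
  "'a set \<Rightarrow> ('a \<Rightarrow> 'a \<Rightarrow> real) \<Rightarrow> ('b \<Rightarrow> 'b \<Rightarrow> real) \<Rightarrow> real \<Rightarrow> real \<Rightarrow> ('a \<Rightarrow> 'b) \<Rightarrow> bool" where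
  "almost_lipschitz_on A dA dB c L f \<longleftrightarrow> (\<forall>x\<in>A. \<forall>x'\<in>A. dB (f x) (f x') \<le> L * dA x x' + c)"

end

theory Submission
  imports Defs
begin

text \<open>
  By Lusin's theorem there is a compact set \<open>K\<close> of measure close to \<open>1\<close> on which \<open>\<Phi>\<close>
  is uniformly continuous: \<open>d(u,v) < \<delta>\<close> implies \<open>d(\<Phi> u, \<Phi> v) \<le> \<epsilon>/2\<close>. With \<open>D\<close> a bound for the
  distances in \<open>Y\<close>, every pair \<open>u, v \<in> K\<close> then satisfies \<open>d(\<Phi> u, \<Phi> v) \<le> (D/\<delta>) d(u,v) + \<epsilon>/2\<close>.
  Summing this along orbit segments of length \<open>N\<close> (using \<open>\<Phi> \<circ> T^n = S^n \<circ> \<Phi>\<close> a.e.) gives the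
  claim with \<open>L = D/\<delta>\<close>, except that each time at which one of the two orbits is outside \<open>K\<close> costs
  up to \<open>D\<close>. Since \<open>T\<close> preserves \<open>\<mu>\<close>, the expected number of such times in \<open>[-N;N)\<close> is
  \<open>2N \<mu>(X - K)\<close>, so by Markov's inequality most points have at most \<open>c N\<close> of them; removing the
  remaining points and approximating from inside by a closed set yields the compact set \<open>X0\<close>.
\<close>

lemma measure_UN_le_geometric:
  assumes "finite_measure M" and "\<And>i. A i \<in> sets M"
    and "\<And>i. measure M (A i) \<le> e * (1/2) ^ Suc i"
  shows "measure M (\<Union>i. A i) \<le> e"
proof -
  interpret finite_measure M by fact
  have geo: "(\<lambda>i. e * (1/2) ^ Suc i) sums e"
    using sums_mult[OF power_half_series, of e] by simp
  have summable: "summable (\<lambda>i. measure M (A i))"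
    by (rule summable_comparison_test'[OF sums_summable[OF geo], of 0]) (use assms(3) in auto)
  have "measure M (\<Union>i. A i) \<le> (\<Sum>i. measure M (A i))"
    using assms(2) summable by (intro finite_measure_subadditive_countably) auto
  also have "\<dots> \<le> e"
    using suminf_le[OF assms(3) summable sums_summable[OF geo]] sums_unique[OF geo] by simp
  finally show ?thesis .
qed

definition closed_open_regular :: "'a::metric_space measure \<Rightarrow> 'a set \<Rightarrow> bool" where
  "closed_open_regular M B \<longleftrightarrow>
     (\<forall>e>0. \<exists>F U. closed F \<and> open U \<and> F \<subseteq> B \<and> B \<subseteq> U \<and> measure M (U - F) < e)"

text \<open>Open sets are regular: \<open>U\<close> is exhausted by the closed sets
  \<open>{x. 1/(j+1) \<le> infdist x (- U)}\<close>, and continuity of measure does the rest.\<close>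
lemma open_closed_open_regular:
  fixes M :: "'a::metric_space measure"
  assumes "finite_measure M" and "sets M = sets borel" and "open U"
  shows "closed_open_regular M U"
  unfolding closed_open_regular_def
proof (intro allI impI)
  fix e :: real assume "e > 0"
  show "\<exists>F V. closed F \<and> open V \<and> F \<subseteq> U \<and> U \<subseteq> V \<and> measure M (V - F) < e"
  proof (cases "U = UNIV")
    case True
    then show ?thesis using \<open>e > 0\<close> by (intro exI[of _ UNIV]) auto
  next
    case False
    interpret finite_measure M by fact
    define F where "F j = {x. 1 / real (Suc j) \<le> infdist x (- U)}" for j
    have closed_F: "closed (F j)" for j
      unfolding F_def by (intro closed_Collect_le continuous_intros)
    have F_sub: "F j \<subseteq> U" for j
    proof
      fix x assume "x \<in> F j"
      then have "0 < infdist x (- U)"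
        unfolding F_def by (auto intro: less_le_trans[of 0 "1 / real (Suc j)"])
      then show "x \<in> U" using infdist_zero[of x "- U"] by (cases "x \<in> U") auto
    qed
    have "incseq F"
    proof (rule incseq_SucI)
      fix j
      have "1 / real (Suc (Suc j)) \<le> 1 / real (Suc j)" by (intro divide_left_mono) auto
      then show "F j \<subseteq> F (Suc j)" unfolding F_def by auto
    qed
    have "(\<Union>j. F j) = U"
    proof (intro equalityI subsetI)
      fix x assume "x \<in> U"
      have "infdist x (- U) > 0"
        using False \<open>x \<in> U\<close> \<open>open U\<close> by (intro infdist_pos_not_in_closed) auto
      then obtain j where "inverse (real (Suc j)) < infdist x (- U)"
        using reals_Archimedean by blast
      then have "x \<in> F j" unfolding F_def by (simp add: inverse_eq_divide)
      then show "x \<in> (\<Union>j. F j)" by blast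
    qed (use F_sub in auto)
    have F_meas: "F j \<in> sets M" for j using closed_F assms(2) by simp
    have "(\<lambda>j. measure M (F j)) \<longlonglongrightarrow> measure M U"
      using finite_Lim_measure_incseq[OF _ \<open>incseq F\<close>] F_meas \<open>(\<Union>j. F j) = U\<close> by auto
    then obtain j where j: "dist (measure M (F j)) (measure M U) < e"
      using \<open>e > 0\<close> unfolding lim_sequentially by blast
    have "measure M (U - F j) = measure M U - measure M (F j)"
      using F_sub F_meas assms(2,3) by (intro finite_measure_Diff) auto
    then have "measure M (U - F j) < e" using j by (simp add: dist_real_def)
    then show ?thesis using closed_F F_sub \<open>open U\<close> by blast
  qed
qed

text \<open>Regularity is stable under complement (swap the roles of the closed and the open set) ...\<close>
lemma closed_open_regular_Compl:
  assumes "closed_open_regular M B"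
  shows "closed_open_regular M (- B)"
  unfolding closed_open_regular_def
proof (intro allI impI)
  fix e :: real assume "e > 0"
  then have "\<exists>F U. closed F \<and> open U \<and> F \<subseteq> B \<and> B \<subseteq> U \<and> measure M (U - F) < e"
    using assms unfolding closed_open_regular_def by simp
  then obtain F U where "closed F" "open U" "F \<subseteq> B" "B \<subseteq> U" "measure M (U - F) < e"
    by blast
  moreover have "(- F) - (- U) = U - F" by blast
  ultimately show "\<exists>F' U'. closed F' \<and> open U' \<and> F' \<subseteq> - B \<and> - B \<subseteq> U' \<and> measure M (U' - F') < e"
    by (intro exI[of _ "- U"] exI[of _ "- F"]) auto
qed

text \<open>... and under countable unions: sandwich the \<open>i\<close>-th set with error \<open>e/2 * (1/2)^(i+1)\<close> and keep
  only finitely many closed pieces, which exhaust the union up to \<open>e/2\<close>.\<close>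
lemma closed_open_regular_UN:
  fixes M :: "'a::metric_space measure" and A :: "nat \<Rightarrow> 'a set"
  assumes "finite_measure M" and "sets M = sets borel" and A_meas: "\<And>i. A i \<in> sets M"
    and A_reg: "\<And>i. closed_open_regular M (A i)"
  shows "closed_open_regular M (\<Union>i. A i)"
  unfolding closed_open_regular_def
proof (intro allI impI)
  interpret finite_measure M by fact
  fix e :: real assume "e > 0"
  have "\<forall>i. \<exists>F U. closed F \<and> open U \<and> F \<subseteq> A i \<and> A i \<subseteq> U \<and> measure M (U - F) < e/2 * (1/2) ^ Suc i"
  proof
    fix i
    have "e/2 * (1/2) ^ Suc i > 0" using \<open>e > 0\<close> by simp
    then show "\<exists>F U. closed F \<and> open U \<and> F \<subseteq> A i \<and> A i \<subseteq> U \<and> measure M (U - F) < e/2 * (1/2) ^ Suc i"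
      using A_reg[of i] unfolding closed_open_regular_def by blast
  qed
  then obtain F U where F: "\<And>i. closed (F i)" "\<And>i. F i \<subseteq> A i"
    and U: "\<And>i. open (U i)" "\<And>i. A i \<subseteq> U i"
    and gap: "\<And>i. measure M (U i - F i) < e/2 * (1/2) ^ Suc i"
    by metis
  have "(\<lambda>n. measure M (\<Union>i<n. A i)) \<longlonglongrightarrow> measure M (\<Union>n. \<Union>i<n. A i)"
    using A_meas by (intro finite_Lim_measure_incseq) (auto simp: incseq_def intro: less_le_trans)
  moreover have "(\<Union>n. \<Union>i<n. A i) = (\<Union>i. A i)" by blast
  ultimately have "(\<lambda>n. measure M (\<Union>i<n. A i)) \<longlonglongrightarrow> measure M (\<Union>i. A i)" by simp
  moreover have "e/2 > 0" using \<open>e > 0\<close> by simp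
  ultimately obtain n where n: "dist (measure M (\<Union>i<n. A i)) (measure M (\<Union>i. A i)) < e/2"
    unfolding lim_sequentially by blast
  have tail: "measure M ((\<Union>i. A i) - (\<Union>i<n. A i)) < e/2"
  proof -
    have "measure M ((\<Union>i. A i) - (\<Union>i<n. A i)) = measure M (\<Union>i. A i) - measure M (\<Union>i<n. A i)"
      using A_meas by (intro finite_measure_Diff) auto
    then show ?thesis using n unfolding dist_real_def by argo
  qed
  have gaps: "measure M (\<Union>i. U i - F i) \<le> e/2"
    using U(1) F(1) assms(2) gap by (intro measure_UN_le_geometric \<open>finite_measure M\<close> less_imp_le) auto
  have "(\<Union>i. U i) - (\<Union>i<n. F i) \<subseteq> (\<Union>i. U i - F i) \<union> ((\<Union>i. A i) - (\<Union>i<n. A i))"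
    using F(2) U(2) by blast
  then have "measure M ((\<Union>i. U i) - (\<Union>i<n. F i))
      \<le> measure M (\<Union>i. U i - F i) + measure M ((\<Union>i. A i) - (\<Union>i<n. A i))"
    using U(1) F(1) A_meas assms(2)
    by (intro order_trans[OF finite_measure_mono measure_subadditive]) auto
  then have "measure M ((\<Union>i. U i) - (\<Union>i<n. F i)) < e" using tail gaps by linarith
  moreover have "closed (\<Union>i<n. F i)" "open (\<Union>i. U i)" using F(1) U(1) by auto
  ultimately show "\<exists>F' U'. closed F' \<and> open U' \<and> F' \<subseteq> (\<Union>i. A i) \<and> (\<Union>i. A i) \<subseteq> U'
      \<and> measure M (U' - F') < e"
    using F(2) U(2) by (intro exI[of _ "\<Union>i<n. F i"] exI[of _ "\<Union>i. U i"]) blast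
qed

lemma borel_closed_open_regular:
  fixes M :: "'a::metric_space measure"
  assumes "finite_measure M" and "sets M = sets borel" and "B \<in> sets borel"
  shows "closed_open_regular M B"
  using assms(3) unfolding sets_borel
proof (induction rule: sigma_sets.induct)
  case (Basic U)
  then show ?case using open_closed_open_regular[OF assms(1,2)] by simp
next
  case Empty
  then show ?case using open_closed_open_regular[OF assms(1,2)] by simp
next
  case (Compl B)
  then show ?case using closed_open_regular_Compl by (simp add: Compl_eq_Diff_UNIV[symmetric])
next
  case (Union A)
  have "A i \<in> sets M" for i using Union.hyps assms(2) sets_borel by metis
  then show ?case using closed_open_regular_UN[OF assms(1,2)] Union.IH by blast
qed

lemma closed_subset_large_measure:
  fixes M :: "'a::metric_space measure"
  assumes "finite_measure M" and "sets M = sets borel" and "G \<in> sets M" and "e > 0"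
  shows "\<exists>F. closed F \<and> F \<subseteq> G \<and> measure M G - e < measure M F"
proof -
  interpret finite_measure M by fact
  have "\<exists>F U. closed F \<and> open U \<and> F \<subseteq> G \<and> G \<subseteq> U \<and> measure M (U - F) < e"
    using borel_closed_open_regular[OF assms(1,2)] assms(2,3,4) unfolding closed_open_regular_def by simp
  then obtain F U where F: "closed F" "F \<subseteq> G" and U: "open U" "G \<subseteq> U" and "measure M (U - F) < e"
    by blast
  have "measure M (G - F) \<le> measure M (U - F)"
    using F U assms(2,3) by (intro finite_measure_mono) auto
  moreover have "measure M (G - F) = measure M G - measure M F"
    using F assms(2,3) by (intro finite_measure_Diff) auto
  ultimately show ?thesis using F \<open>measure M (U - F) < e\<close> by (intro exI[of _ F]) auto
qed

text \<open>A Borel set becomes relatively open once a small open set \<open>H\<close> is removed: take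
  \<open>H = U - F\<close> for a closed/open sandwich \<open>F \<subseteq> E \<subseteq> U\<close>.\<close>
lemma borel_open_off_small_open:
  fixes M :: "'a::metric_space measure"
  assumes "finite_measure M" and "sets M = sets borel" and "E \<in> sets borel" and "\<eta> > 0"
  shows "\<exists>H U. open H \<and> open U \<and> measure M H < \<eta> \<and> E - H = U - H"
proof -
  have "\<exists>F U. closed F \<and> open U \<and> F \<subseteq> E \<and> E \<subseteq> U \<and> measure M (U - F) < \<eta>"
    using borel_closed_open_regular[OF assms(1-3)] \<open>\<eta> > 0\<close> unfolding closed_open_regular_def by simp
  then obtain F U where "closed F" "open U" "F \<subseteq> E" "E \<subseteq> U" "measure M (U - F) < \<eta>"
    by blast
  moreover have "E - (U - F) = U - (U - F)" using \<open>F \<subseteq> E\<close> \<open>E \<subseteq> U\<close> by blast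
  ultimately show ?thesis by (intro exI[of _ "U - F"] exI[of _ U]) auto
qed

lemma borel_family_open_off_small_open:
  fixes M :: "'a::metric_space measure" and E :: "'i \<Rightarrow> 'a set"
  assumes "finite_measure M" and "sets M = sets borel"
    and "finite C" and E: "\<And>c. c \<in> C \<Longrightarrow> E c \<in> sets borel" and "\<eta> > 0"
  shows "\<exists>H. open H \<and> measure M H < \<eta> \<and> (\<forall>c\<in>C. \<exists>U. open U \<and> E c - H = U - H)"
proof -
  interpret finite_measure M by fact
  define \<eta>' where "\<eta>' = \<eta> / (real (card C) + 1)"
  have "\<eta>' > 0" unfolding \<eta>'_def using \<open>\<eta> > 0\<close> by simp
  have "\<forall>c\<in>C. \<exists>H U. open H \<and> open U \<and> measure M H < \<eta>' \<and> E c - H = U - H"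
    using E by (intro ballI borel_open_off_small_open[OF assms(1,2) _ \<open>\<eta>' > 0\<close>])
  then obtain H U where H: "\<And>c. c \<in> C \<Longrightarrow> open (H c)" "\<And>c. c \<in> C \<Longrightarrow> measure M (H c) < \<eta>'"
    and U: "\<And>c. c \<in> C \<Longrightarrow> open (U c) \<and> E c - H c = U c - H c"
    by metis
  have "measure M (\<Union>c\<in>C. H c) \<le> (\<Sum>c\<in>C. measure M (H c))"
    using \<open>finite C\<close> H(1) assms(2) by (intro measure_UNION_le) auto
  also have "\<dots> \<le> real (card C) * \<eta>'"
    using sum_mono[of C "\<lambda>c. measure M (H c)" "\<lambda>_. \<eta>'"] H(2) by (simp add: less_imp_le)
  also have "\<dots> < \<eta>" unfolding \<eta>'_def using \<open>\<eta> > 0\<close> by (simp add: field_simps)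
  finally have "measure M (\<Union>c\<in>C. H c) < \<eta>" .
  moreover have "open (U c) \<and> E c - (\<Union>c\<in>C. H c) = U c - (\<Union>c\<in>C. H c)" if "c \<in> C" for c
    using U[OF that] that by blast
  moreover have "open (\<Union>c\<in>C. H c)" using H(1) by blast
  ultimately show ?thesis by blast
qed

text \<open>At scale \<open>1/(m+1)\<close> the
  preimages of a finite cover of the target by balls are made relatively open by removing an open
  set \<open>H m\<close> of measure \<open>< e/2 * (1/2)^(m+1)\<close>; the set \<open>K\<close> avoiding all \<open>H m\<close> does the job.\<close>
lemma lusin_closed:
  fixes M :: "'a::metric_space measure" and \<Phi> :: "'a \<Rightarrow> 'b::metric_space"
  assumes "finite_measure M" and "sets M = sets borel"
    and "\<Phi> \<in> borel_measurable borel" and "compact (UNIV :: 'b set)" and "e > 0"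
  shows "\<exists>K. closed K \<and> measure M (- K) < e \<and> continuous_on K \<Phi>"
proof -
  have "\<forall>m. \<exists>C. finite C \<and> (UNIV :: 'b set) \<subseteq> (\<Union>c\<in>C. ball c (1 / real (Suc m)))"
    using seq_compact_imp_totally_bounded[OF compact_imp_seq_compact[OF assms(4)]] by simp
  then obtain C where C: "\<And>m. finite (C m)"
    and cover: "\<And>m. (UNIV :: 'b set) \<subseteq> (\<Union>c\<in>C m. ball c (1 / real (Suc m)))"
    by metis
  have preimage_borel: "\<Phi> -` ball c r \<in> sets borel" for c r
    using measurable_sets[OF assms(3), of "ball c r"] by simp
  have "\<forall>m. \<exists>H. open H \<and> measure M H < e/2 * (1/2) ^ Suc m \<and>
      (\<forall>c\<in>C m. \<exists>U. open U \<and> \<Phi> -` ball c (1 / real (Suc m)) - H = U - H)"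
    using \<open>e > 0\<close> by (intro allI borel_family_open_off_small_open[OF assms(1,2) C preimage_borel]) simp
  then obtain H where H: "\<And>m. open (H m)" "\<And>m. measure M (H m) < e/2 * (1/2) ^ Suc m"
    and rel_open: "\<And>m c. c \<in> C m \<Longrightarrow> \<exists>U. open U \<and> \<Phi> -` ball c (1 / real (Suc m)) - H m = U - H m"
    by metis
  define K where "K = - (\<Union>m. H m)"
  have "measure M (\<Union>m. H m) \<le> e/2"
    using H assms(2) by (intro measure_UN_le_geometric[OF assms(1)] less_imp_le) auto
  then have "measure M (- K) < e" unfolding K_def using \<open>e > 0\<close> by simp
  moreover have "closed K" unfolding K_def using H(1) by auto
  moreover have "continuous_on K \<Phi>"
    unfolding continuous_on_iff
  proof (intro ballI allI impI)
    fix x and \<epsilon> :: real assume "x \<in> K" and "\<epsilon> > 0"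
    obtain m where m: "inverse (real (Suc m)) < \<epsilon>/2"
      using reals_Archimedean \<open>\<epsilon> > 0\<close> half_gt_zero by blast
    define r where "r = 1 / real (Suc m)"
    obtain c where c: "c \<in> C m" "\<Phi> x \<in> ball c r"
      using cover[of m] unfolding r_def by blast
    obtain U where U: "open U" "\<Phi> -` ball c r - H m = U - H m"
      using rel_open[OF c(1)] unfolding r_def by blast
    have "x \<in> U" using c(2) U(2) \<open>x \<in> K\<close> unfolding K_def by blast
    then obtain d where "d > 0" "ball x d \<subseteq> U" using U(1) openE by blast
    have "dist (\<Phi> x') (\<Phi> x) < \<epsilon>" if "x' \<in> K" "dist x' x < d" for x'
    proof -
      have "x' \<in> U - H m" using that \<open>ball x d \<subseteq> U\<close> unfolding K_def by (auto simp: dist_commute)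
      then have "\<Phi> x' \<in> ball c r" using U(2) by blast
      then have "dist (\<Phi> x') (\<Phi> x) < 2 * r"
        using c(2) dist_triangle[of "\<Phi> x'" "\<Phi> x" c] by (simp add: dist_commute)
      then show ?thesis using m unfolding r_def by (simp add: inverse_eq_divide)
    qed
    then show "\<exists>d>0. \<forall>x'\<in>K. dist x' x < d \<longrightarrow> dist (\<Phi> x') (\<Phi> x) < \<epsilon>"
      using \<open>d > 0\<close> by blast
  qed
  ultimately show ?thesis by blast
qed

lemma lusin_modulus:
  fixes M :: "'a::metric_space measure" and \<Phi> :: "'a \<Rightarrow> 'b::metric_space"
  assumes "finite_measure M" and "sets M = sets borel" and "\<Phi> \<in> borel_measurable borel"
    and "compact (UNIV :: 'a set)" and "compact (UNIV :: 'b set)" and "\<eta> > 0" and "\<rho> > 0"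
  obtains K \<delta> where "closed K" "measure M (- K) < \<eta>" "continuous_on K \<Phi>" "\<delta> > 0"
    "\<And>u v. u \<in> K \<Longrightarrow> v \<in> K \<Longrightarrow> dist u v < \<delta> \<Longrightarrow> dist (\<Phi> u) (\<Phi> v) \<le> \<rho>"
proof -
  obtain K where K: "closed K" "measure M (- K) < \<eta>" "continuous_on K \<Phi>"
    using lusin_closed[OF assms(1-3,5,6)] by blast
  have "compact K" using compact_Int_closed[OF assms(4) K(1)] by simp
  then have "uniformly_continuous_on K \<Phi>" using K(3) by (intro compact_uniformly_continuous)
  then obtain \<delta> where "\<delta> > 0" "\<And>u v. u \<in> K \<Longrightarrow> v \<in> K \<Longrightarrow> dist v u < \<delta> \<Longrightarrow> dist (\<Phi> v) (\<Phi> u) < \<rho>"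
    using \<open>\<rho> > 0\<close> unfolding uniformly_continuous_on_def by metis
  then show ?thesis using K by (intro that[of K \<delta>]) (auto intro: less_imp_le)
qed

definition measure_preserving :: "'a measure \<Rightarrow> ('a \<Rightarrow> 'a) \<Rightarrow> bool" where
  "measure_preserving M f \<longleftrightarrow> f \<in> M \<rightarrow>\<^sub>M M \<and> distr M M f = M"

lemma measure_preserving_funpow:
  assumes "measure_preserving M f"
  shows "measure_preserving M (f ^^ k)"
proof (induction k)
  case 0
  then show ?case by (simp add: measure_preserving_def id_def)
next
  case (Suc k)
  have f: "f \<in> M \<rightarrow>\<^sub>M M" "distr M M f = M" and fk: "f ^^ k \<in> M \<rightarrow>\<^sub>M M" "distr M M (f ^^ k) = M"
    using assms Suc unfolding measure_preserving_def by auto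
  have "distr M M (f \<circ> f ^^ k) = distr (distr M M (f ^^ k)) M f"
    using f(1) fk(1) by (intro distr_distr[symmetric])
  then show ?case using f fk unfolding measure_preserving_def by (simp add: measurable_comp)
qed

lemma measure_preserving_left_inverse:
  assumes "measure_preserving M f" and "g \<in> M \<rightarrow>\<^sub>M M" and "\<And>x. x \<in> space M \<Longrightarrow> g (f x) = x"
  shows "measure_preserving M g"
proof -
  have f: "f \<in> M \<rightarrow>\<^sub>M M" "distr M M f = M" using assms(1) unfolding measure_preserving_def by auto
  have "distr M M g = distr (distr M M f) M g" using f(2) by simp
  also have "\<dots> = distr M M (g \<circ> f)" by (rule distr_distr[OF assms(2) f(1)])
  also have "\<dots> = distr M M (\<lambda>x. x)" using assms(3) f(1) by (intro distr_cong) (auto dest: measurable_space)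
  finally show ?thesis using assms(2) unfolding measure_preserving_def by simp
qed

lemma AE_intertwining_funpow:
  assumes "measure_preserving M f" and "AE x in M. \<Phi> (f x) = g (\<Phi> x)"
  shows "AE x in M. \<forall>k. \<Phi> ((f ^^ k) x) = (g ^^ k) (\<Phi> x)"
proof -
  have "AE x in M. \<Phi> ((f ^^ k) x) = (g ^^ k) (\<Phi> x)" for k
  proof (induction k)
    case (Suc k)
    have fk: "f ^^ k \<in> M \<rightarrow>\<^sub>M M" "distr M M (f ^^ k) = M"
      using measure_preserving_funpow[OF assms(1)] unfolding measure_preserving_def by auto
    have "AE x in distr M M (f ^^ k). \<Phi> (f x) = g (\<Phi> x)" by (subst fk(2)) (rule assms(2))
    then have "AE x in M. \<Phi> (f ((f ^^ k) x)) = g (\<Phi> ((f ^^ k) x))" by (rule AE_distrD[OF fk(1)])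
    with Suc show ?case by eventually_elim simp
  qed simp
  then show ?thesis by (simp add: AE_all_countable)
qed

lemma AE_intertwining_inverse:
  assumes "measure_preserving M f'" and "\<And>x. f (f' x) = x" and "\<And>y. g' (g y) = y"
    and "AE x in M. \<Phi> (f x) = g (\<Phi> x)"
  shows "AE x in M. \<Phi> (f' x) = g' (\<Phi> x)"
proof -
  have f': "f' \<in> M \<rightarrow>\<^sub>M M" "distr M M f' = M" using assms(1) unfolding measure_preserving_def by auto
  have "AE x in distr M M f'. \<Phi> (f x) = g (\<Phi> x)" by (subst f'(2)) (rule assms(4))
  then have "AE x in M. \<Phi> (f (f' x)) = g (\<Phi> (f' x))" by (rule AE_distrD[OF f'(1)])
  then show ?thesis
  proof eventually_elim
    case (elim x)
    then have "g' (\<Phi> x) = g' (g (\<Phi> (f' x)))" using assms(2) by simp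
    then show ?case using assms(3) by simp
  qed
qed

lemma measure_preserving_zpow:
  assumes "measure_preserving M T" and "measure_preserving M (inv T)"
  shows "measure_preserving M (zpow T n)"
  using measure_preserving_funpow[OF assms(1)] measure_preserving_funpow[OF assms(2)]
  by (simp add: zpow_def)

lemma AE_intertwining_zpow:
  assumes "measure_preserving M T" and "measure_preserving M (inv T)"
    and "\<And>x. T (inv T x) = x" and "\<And>y. inv S (S y) = y"
    and "AE x in M. \<Phi> (T x) = S (\<Phi> x)"
  shows "AE x in M. \<forall>n. \<Phi> (zpow T n x) = zpow S n (\<Phi> x)"
proof -
  have "AE x in M. \<Phi> (inv T x) = inv S (\<Phi> x)"
    using AE_intertwining_inverse[OF assms(2-5)] .
  from AE_intertwining_funpow[OF assms(1,5)] AE_intertwining_funpow[OF assms(2) this]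
  have "AE x in M. (\<forall>k. \<Phi> ((T ^^ k) x) = (S ^^ k) (\<Phi> x))
      \<and> (\<forall>k. \<Phi> ((inv T ^^ k) x) = (inv S ^^ k) (\<Phi> x))"
    by eventually_elim blast
  then show ?thesis by eventually_elim (simp add: zpow_def)
qed

lemma compact_model_pps_inverse:
  assumes "compact_model_pps M T"
  shows "measure_preserving M T" and "measure_preserving M (inv T)"
    and "\<And>x. T (inv T x) = x" and "\<And>x. inv T (T x) = x"
proof -
  obtain T' where hom: "homeomorphism UNIV UNIV T T'" and sets: "sets M = sets borel"
    and mp: "measure_preserving M T"
    using assms unfolding compact_model_pps_def measure_preserving_def by blast
  have T'T: "T' (T x) = x" and TT': "T (T' x) = x" for x
    using hom unfolding homeomorphism_def by auto
  have "inv T = T'" using T'T TT' by (intro inv_equality)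
  have "T' \<in> borel_measurable borel"
    using hom unfolding homeomorphism_def by (intro borel_measurable_continuous_onI) simp
  then have "T' \<in> M \<rightarrow>\<^sub>M M" using measurable_cong_sets[OF sets sets] by simp
  then show "measure_preserving M (inv T)"
    using measure_preserving_left_inverse[OF mp] T'T \<open>inv T = T'\<close> by simp
  show "measure_preserving M T" by (rule mp)
  show "T (inv T x) = x" "inv T (T x) = x" for x using T'T TT' \<open>inv T = T'\<close> by simp_all
qed

lemma borel_factor_map_orbits:
  assumes "compact_model_pps M T" and "compact_model_pps N S" and "borel_factor_map M T N S \<Phi>"
  shows "AE x in M. \<forall>n. \<Phi> (zpow T n x) = zpow S n (\<Phi> x)"
  using assms(3) compact_model_pps_inverse[OF assms(1)] compact_model_pps_inverse[OF assms(2)]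
  unfolding borel_factor_map_def by (intro AE_intertwining_zpow) auto

definition visits_outside :: "'a set \<Rightarrow> ('i \<Rightarrow> 'a \<Rightarrow> 'a) \<Rightarrow> 'i set \<Rightarrow> 'a \<Rightarrow> real" where
  "visits_outside K f W x = (\<Sum>k\<in>W. indicator (- K) (f k x))"

lemma visits_outside_mono:
  assumes "finite W" and "I \<subseteq> W"
  shows "visits_outside K f I x \<le> visits_outside K f W x"
  unfolding visits_outside_def using assms by (intro sum_mono2) auto

text \<open>Markov's inequality for visit counts: if every \<open>f k\<close> preserves \<open>M\<close>, the expected number of
  visits outside \<open>K\<close> is \<open>card W * measure M (- K)\<close>.\<close>
lemma visits_outside_Markov:
  assumes "finite_measure M" and mp: "\<And>k. k \<in> W \<Longrightarrow> measure_preserving M (f k)"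
    and "- K \<in> sets M" and "a > 0"
  shows "measure M {x \<in> space M. a \<le> visits_outside K f W x} \<le> real (card W) * measure M (- K) / a"
proof -
  interpret finite_measure M by fact
  have f: "f k \<in> M \<rightarrow>\<^sub>M M" "distr M M (f k) = M" if "k \<in> W" for k
    using mp[OF that] unfolding measure_preserving_def by auto
  have integrable: "integrable M (\<lambda>x. indicator (- K) (f k x) :: real)" if "k \<in> W" for k
  proof -
    have "(\<lambda>x. indicator (- K) (f k x) :: real) \<in> borel_measurable M"
      using f(1)[OF that] \<open>- K \<in> sets M\<close> by measurable
    then show ?thesis by (intro integrable_const_bound[where B=1]) (auto simp: indicator_def)
  qed
  have expectation: "(\<integral>x. indicator (- K) (f k x) \<partial>M) = measure M (- K)" if "k \<in> W" for k
  proof -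
    have "(\<integral>x. indicator (- K) (f k x) \<partial>M) = integral\<^sup>L (distr M M (f k)) (indicator (- K) :: _ \<Rightarrow> real)"
      using f(1)[OF that] \<open>- K \<in> sets M\<close> by (intro integral_distr[symmetric]) auto
    then show ?thesis using f(2)[OF that] \<open>- K \<in> sets M\<close> by simp
  qed
  have "measure M {x \<in> space M. a \<le> visits_outside K f W x} \<le> (\<integral>x. visits_outside K f W x \<partial>M) / a"
    unfolding visits_outside_def using integrable \<open>a > 0\<close>
    by (intro integral_Markov_inequality_measure[where A="{}"]) (auto intro: sum_nonneg)
  also have "(\<integral>x. visits_outside K f W x \<partial>M) = real (card W) * measure M (- K)"
    unfolding visits_outside_def
    using Bochner_Integration.integral_sum[of W M "\<lambda>k x. indicator (- K) (f k x) :: real"]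
      integrable expectation by simp
  finally show ?thesis .
qed

text \<open>The bad points
  are \<open>- K\<close>, a null set, and (by Markov's inequality) the points with too many visits outside \<open>K\<close>.\<close>
lemma compact_set_with_rare_visits:
  fixes M :: "'a::metric_space measure" and f :: "'i \<Rightarrow> 'a \<Rightarrow> 'a"
  assumes "prob_space M" and sets: "sets M = sets borel" and "compact (UNIV :: 'a set)"
    and mp: "\<And>k. k \<in> W \<Longrightarrow> measure_preserving M (f k)"
    and "closed K" and "AE x in M. P x" and "a > 0"
    and small: "measure M (- K) + real (card W) * measure M (- K) / a < \<epsilon>"
  shows "\<exists>F. compact F \<and> F \<subseteq> K \<and> 1 - \<epsilon> < measure M F \<and> (\<forall>x\<in>F. P x \<and> visits_outside K f W x < a)"
proof -
  interpret prob_space M by fact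
  have space: "space M = UNIV" using sets by (metis sets_eq_imp_space_eq space_borel)
  obtain N where N: "{x \<in> space M. \<not> P x} \<subseteq> N" "emeasure M N = 0" "N \<in> sets M"
    using \<open>AE x in M. P x\<close> by (rule AE_E)
  define B where "B = {x \<in> space M. a \<le> visits_outside K f W x}"
  have K_meas: "K \<in> sets M" "- K \<in> sets M" using \<open>closed K\<close> sets by simp_all
  have B_meas: "B \<in> sets M"
  proof -
    have [measurable]: "f k \<in> M \<rightarrow>\<^sub>M M" if "k \<in> W" for k
      using mp[OF that] unfolding measure_preserving_def by simp
    have "visits_outside K f W \<in> borel_measurable M"
      unfolding visits_outside_def using K_meas(2) by measurable
    then show ?thesis unfolding B_def by measurable
  qed
  define G where "G = K - N - B"
  have G_meas: "G \<in> sets M" unfolding G_def using K_meas N(3) B_meas by auto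
  have "measure M (- G) \<le> measure M (- K) + measure M N + measure M B"
  proof -
    have "- G = (- K \<union> N) \<union> B" unfolding G_def by blast
    then show ?thesis using K_meas N(3) B_meas
      by (auto intro!: order_trans[OF measure_subadditive] simp: measure_subadditive)
  qed
  moreover have "measure M N = 0" using N(2) by (simp add: measure_def)
  moreover have "measure M B \<le> real (card W) * measure M (- K) / a"
    unfolding B_def using visits_outside_Markov[OF finite_measure_axioms mp K_meas(2) \<open>a > 0\<close>] .
  moreover have "measure M G = 1 - measure M (- G)"
    using prob_compl[OF G_meas] space by (simp add: Compl_eq_Diff_UNIV)
  ultimately have "1 - \<epsilon> < measure M G" using small by linarith
  then obtain F where F: "closed F" "F \<subseteq> G" "1 - \<epsilon> < measure M F"
    using closed_subset_large_measure[OF _ sets G_meas, of "measure M G - (1 - \<epsilon>)"]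
    by (auto intro: finite_measure_axioms)
  have "compact F" using compact_Int_closed[OF \<open>compact UNIV\<close> F(1)] by simp
  moreover have "P x \<and> visits_outside K f W x < a" if "x \<in> F" for x
    using that F(2) N(1) space unfolding G_def B_def by auto
  ultimately show ?thesis using F G_def by blast
qed

lemma compact_space_dist_bound:
  assumes "compact (UNIV :: 'a::metric_space set)"
  obtains D where "D > 0" and "\<And>y y' :: 'a. dist y y' \<le> D"
proof
  have "bounded (UNIV :: 'a set)" using assms by (rule compact_imp_bounded)
  then show "diameter (UNIV :: 'a set) + 1 > 0" using diameter_ge_0 by fastforce
  show "dist y y' \<le> diameter (UNIV :: 'a set) + 1" for y y' :: 'a
    using diameter_bounded_bound[OF \<open>bounded UNIV\<close> UNIV_I UNIV_I, of y y'] by linarith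
qed

lemma dist_le_off_bad_set:
  fixes \<Phi> :: "'a::metric_space \<Rightarrow> 'b::metric_space"
  assumes diam: "\<And>y y' :: 'b. dist y y' \<le> D" and "\<delta> > 0" and "\<rho> \<ge> 0"
    and modulus: "\<And>u v. u \<in> K \<Longrightarrow> v \<in> K \<Longrightarrow> dist u v < \<delta> \<Longrightarrow> dist (\<Phi> u) (\<Phi> v) \<le> \<rho>"
  shows "dist (\<Phi> u) (\<Phi> v) \<le> D/\<delta> * dist u v + \<rho> + D * (indicator (- K) u + indicator (- K) v)"
proof -
  have "D \<ge> 0" using diam[of "\<Phi> u" "\<Phi> u"] by simp
  then have lip: "0 \<le> D/\<delta> * dist u v" and pen: "0 \<le> D * (indicator (- K) u + indicator (- K) v)"
    using \<open>\<delta> > 0\<close> by simp_all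
  consider "u \<in> K" "v \<in> K" "dist u v < \<delta>" | "u \<in> K" "v \<in> K" "\<delta> \<le> dist u v" | "u \<notin> K \<or> v \<notin> K"
    by fastforce
  then show ?thesis
  proof cases
    case 1
    then show ?thesis using modulus lip pen by fastforce
  next
    case 2
    then have "D \<le> D/\<delta> * dist u v" using \<open>D \<ge> 0\<close> \<open>\<delta> > 0\<close> by (simp add: field_simps mult_left_mono)
    then show ?thesis using diam[of "\<Phi> u" "\<Phi> v"] pen \<open>\<rho> \<ge> 0\<close> by linarith
  next
    case 3
    then have "D \<le> D * (indicator (- K) u + indicator (- K) v)"
      using \<open>D \<ge> 0\<close> by (auto simp: indicator_def)
    then show ?thesis using diam[of "\<Phi> u" "\<Phi> v"] lip \<open>\<rho> \<ge> 0\<close> by linarith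
  qed
qed

lemma sum_dist_le_off_bad_set:
  fixes \<Phi> :: "'a::metric_space \<Rightarrow> 'b::metric_space"
  assumes diam: "\<And>y y' :: 'b. dist y y' \<le> D" and "\<delta> > 0" and "\<rho> \<ge> 0"
    and modulus: "\<And>u v. u \<in> K \<Longrightarrow> v \<in> K \<Longrightarrow> dist u v < \<delta> \<Longrightarrow> dist (\<Phi> u) (\<Phi> v) \<le> \<rho>"
    and orbit: "\<And>k. k \<in> I \<Longrightarrow> \<Phi> (f k x) = g k (\<Phi> x)" "\<And>k. k \<in> I \<Longrightarrow> \<Phi> (f k x') = g k (\<Phi> x')"
  shows "(\<Sum>k\<in>I. dist (g k (\<Phi> x)) (g k (\<Phi> x')))
    \<le> D/\<delta> * (\<Sum>k\<in>I. dist (f k x) (f k x')) + \<rho> * card I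
       + D * (visits_outside K f I x + visits_outside K f I x')"
proof -
  have "(\<Sum>k\<in>I. dist (g k (\<Phi> x)) (g k (\<Phi> x'))) \<le> (\<Sum>k\<in>I. D/\<delta> * dist (f k x) (f k x') + \<rho>
      + D * (indicator (- K) (f k x) + indicator (- K) (f k x')))"
  proof (rule sum_mono)
    fix k assume "k \<in> I"
    have "dist (\<Phi> (f k x)) (\<Phi> (f k x')) \<le> D/\<delta> * dist (f k x) (f k x') + \<rho>
        + D * (indicator (- K) (f k x) + indicator (- K) (f k x'))"
      using diam \<open>\<delta> > 0\<close> \<open>\<rho> \<ge> 0\<close> modulus by (rule dist_le_off_bad_set)
    then show "dist (g k (\<Phi> x)) (g k (\<Phi> x')) \<le> D/\<delta> * dist (f k x) (f k x') + \<rho>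
        + D * (indicator (- K) (f k x) + indicator (- K) (f k x'))"
      using orbit \<open>k \<in> I\<close> by simp
  qed
  also have "\<dots> = D/\<delta> * (\<Sum>k\<in>I. dist (f k x) (f k x')) + \<rho> * card I
      + D * (visits_outside K f I x + visits_outside K f I x')"
    unfolding visits_outside_def by (simp add: sum.distrib sum_distrib_left distrib_left mult.commute)
  finally show ?thesis .
qed

lemma dyn_dist_almost_lipschitz:
  fixes \<Phi> :: "'a::metric_space \<Rightarrow> 'b::metric_space"
  assumes diam: "\<And>y y' :: 'b. dist y y' \<le> D" and "\<delta> > 0" and "\<rho> \<ge> 0"
    and modulus: "\<And>u v. u \<in> K \<Longrightarrow> v \<in> K \<Longrightarrow> dist u v < \<delta> \<Longrightarrow> dist (\<Phi> u) (\<Phi> v) \<le> \<rho>"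
    and orbit: "\<And>x n. x \<in> X0 \<Longrightarrow> n \<in> I \<Longrightarrow> \<Phi> (zpow T n x) = zpow S n (\<Phi> x)"
    and rare: "\<And>x. x \<in> X0 \<Longrightarrow> visits_outside K (zpow T) I x \<le> a"
  shows "almost_lipschitz_on X0 (dyn_dist T I) (dyn_dist S I) (\<rho> * card I + 2 * D * a) (D/\<delta>) \<Phi>"
  unfolding almost_lipschitz_on_def dyn_dist_def
proof (intro ballI)
  fix x x' assume "x \<in> X0" "x' \<in> X0"
  have "D \<ge> 0" using diam[of "\<Phi> x" "\<Phi> x"] by simp
  then have "D * (visits_outside K (zpow T) I x + visits_outside K (zpow T) I x') \<le> D * (2 * a)"
    using rare[OF \<open>x \<in> X0\<close>] rare[OF \<open>x' \<in> X0\<close>] by (intro mult_left_mono) auto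
  moreover have "(\<Sum>n\<in>I. dist (zpow S n (\<Phi> x)) (zpow S n (\<Phi> x')))
      \<le> D/\<delta> * (\<Sum>n\<in>I. dist (zpow T n x) (zpow T n x')) + \<rho> * card I
         + D * (visits_outside K (zpow T) I x + visits_outside K (zpow T) I x')"
    using diam \<open>\<delta> > 0\<close> \<open>\<rho> \<ge> 0\<close> modulus orbit[OF \<open>x \<in> X0\<close>] orbit[OF \<open>x' \<in> X0\<close>]
    by (rule sum_dist_le_off_bad_set)
  ultimately show "(\<Sum>n\<in>I. dist (zpow S n (\<Phi> x)) (zpow S n (\<Phi> x')))
      \<le> D/\<delta> * (\<Sum>n\<in>I. dist (zpow T n x) (zpow T n x')) + (\<rho> * card I + 2 * D * a)"
    by linarith
qed

theorem mainTheorem5: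
  fixes M :: "'a::metric_space measure" and T :: "'a \<Rightarrow> 'a"
    and N :: "'b::metric_space measure" and S :: "'b \<Rightarrow> 'b"
    and \<Phi> :: "'a \<Rightarrow> 'b" and \<epsilon> :: real
  assumes "compact_model_pps M T" and "compact_model_pps N S"
    and "borel_factor_map M T N S \<Phi>"
    and "\<epsilon> > 0"
  shows "\<exists>L::real. \<forall>\<^sub>F n in sequentially. \<exists>X0. compact X0 \<and> measure M X0 > 1 - \<epsilon> \<and>
           continuous_on X0 \<Phi> \<and>
           almost_lipschitz_on X0 (dyn_dist T {- int n..<0}) (dyn_dist S {- int n..<0}) (\<epsilon> * real n) L \<Phi> \<and>
           almost_lipschitz_on X0 (dyn_dist T {0..<int n}) (dyn_dist S {0..<int n}) (\<epsilon> * real n) L \<Phi>"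
proof -
  have X: "compact (UNIV :: 'a set)" "prob_space M" "sets M = sets borel"
    and Y: "compact (UNIV :: 'b set)" and "\<Phi> \<in> borel_measurable borel"
    using assms(1-3) unfolding compact_model_pps_def borel_factor_map_def by auto
  have "finite_measure M" using X(2) unfolding prob_space_def by simp
  have mp: "measure_preserving M (zpow T k)" for k
    using compact_model_pps_inverse[OF assms(1)] by (intro measure_preserving_zpow)
  have orbits: "AE x in M. \<forall>k. \<Phi> (zpow T k x) = zpow S k (\<Phi> x)"
    using borel_factor_map_orbits[OF assms(1-3)] .
  \<comment> \<open>Constants: \<open>D\<close> bounds distances in \<open>Y\<close>, \<open>c\<close> is the admissible frequency of bad times.\<close>
  obtain D where "D > 0" and diam: "\<And>y y' :: 'b. dist y y' \<le> D"
    using compact_space_dist_bound[OF Y] by blast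
  define c where "c = \<epsilon> / (4 * D)"
  have "c > 0" unfolding c_def using \<open>D > 0\<close> \<open>\<epsilon> > 0\<close> by simp
  then have "\<epsilon> * c / (c + 2) > 0" "\<epsilon>/2 > 0" using \<open>\<epsilon> > 0\<close> by simp_all
  obtain K \<delta> where K: "closed K" "measure M (- K) < \<epsilon> * c / (c + 2)" "continuous_on K \<Phi>"
    and "\<delta> > 0" and modulus: "\<And>u v. u \<in> K \<Longrightarrow> v \<in> K \<Longrightarrow> dist u v < \<delta> \<Longrightarrow> dist (\<Phi> u) (\<Phi> v) \<le> \<epsilon>/2"
    using lusin_modulus[OF \<open>finite_measure M\<close> X(3) \<open>\<Phi> \<in> borel_measurable borel\<close> X(1) Y
      \<open>\<epsilon> * c / (c + 2) > 0\<close> \<open>\<epsilon>/2 > 0\<close>] by blast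
  show ?thesis
  proof (intro exI[of _ "D/\<delta>"] eventually_sequentiallyI[of 1])
    fix n :: nat assume "1 \<le> n"
    define W where "W = {- int n..<int n}"
    have "measure M (- K) + real (card W) * measure M (- K) / (c * real n) = measure M (- K) * (c + 2) / c"
      unfolding W_def using \<open>1 \<le> n\<close> \<open>c > 0\<close> by (simp add: field_simps)
    also have "\<dots> < \<epsilon>" using K(2) \<open>c > 0\<close> by (simp add: field_simps)
    finally obtain F where F: "compact F" "F \<subseteq> K" "1 - \<epsilon> < measure M F"
      and good: "\<And>x. x \<in> F \<Longrightarrow> (\<forall>k. \<Phi> (zpow T k x) = zpow S k (\<Phi> x)) \<and> visits_outside K (zpow T) W x < c * real n"
      using compact_set_with_rare_visits[where f="zpow T" and W=W, OF X(2,3,1) mp K(1) orbits, of "c * real n" \<epsilon>] \<open>c > 0\<close> \<open>1 \<le> n\<close>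
      by auto
    have lip: "almost_lipschitz_on F (dyn_dist T I) (dyn_dist S I) (\<epsilon>/2 * card I + 2 * D * (c * real n)) (D/\<delta>) \<Phi>"
      if "I \<subseteq> W" for I
    proof (rule dyn_dist_almost_lipschitz)
      show "visits_outside K (zpow T) I x \<le> c * real n" if "x \<in> F" for x
        using visits_outside_mono[of W I K "zpow T" x] good[OF that] \<open>I \<subseteq> W\<close> unfolding W_def by simp
    qed (use diam \<open>\<delta> > 0\<close> \<open>\<epsilon> > 0\<close> modulus good in auto)
    have "\<epsilon>/2 * real n + 2 * D * (c * real n) = \<epsilon> * real n"
      unfolding c_def using \<open>D > 0\<close> by (simp add: field_simps)
    then have window: "almost_lipschitz_on F (dyn_dist T I) (dyn_dist S I) (\<epsilon> * real n) (D/\<delta>) \<Phi>"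
      if "I \<subseteq> W" and "card I = n" for I
      using lip[OF that(1)] that(2) by simp
    show "\<exists>X0. compact X0 \<and> measure M X0 > 1 - \<epsilon> \<and> continuous_on X0 \<Phi> \<and>
           almost_lipschitz_on X0 (dyn_dist T {- int n..<0}) (dyn_dist S {- int n..<0}) (\<epsilon> * real n) (D/\<delta>) \<Phi> \<and>
           almost_lipschitz_on X0 (dyn_dist T {0..<int n}) (dyn_dist S {0..<int n}) (\<epsilon> * real n) (D/\<delta>) \<Phi>"
      using F continuous_on_subset[OF K(3) F(2)] window[of "{- int n..<0}"] window[of "{0..<int n}"]
      unfolding W_def by auto
  qed
qed

end
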